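(* Let $\mathcal{X},\mathcal{Y}$ be finite Markov chains, $C:{\bm X}\times{\bm Y}\to\mathbb{R}_+$ a cost function, and $\delta\in(0,1]$. Let $T^\infty_\delta$ be a random variable with $\Pr(T^\infty_\delta=t)=\delta(1-\delta)^t$ for $t\in\mathbb{N}$. Then $$d^{\delta,(\infty)}_{\mathrm{WL}}(\mathcal{X},\mathcal{Y};C)=\min_{(X_t,Y_t)_{t\in\mathbb{N}}\in\Pi_{\mathrm H}(\mathcal{X},\mathcal{Y})}\mathbb{E}\,C(X_{T^\infty_\delta},Y_{T^\infty_\delta}),$$ where $T^\infty_\delta$ is independent of the coupling, and in particular the minimum is attained.
   Context: A finite Markov chain $\mathcal{X}=({\bm X},m^{\bm X}_\bullet,\nu^{\bm X})$ consists of a finite set ${\bm X}$, a transition kernel $m^{\bm X}_\bullet:{\bm X}\to\mathcal{P}({\bm X})$ and an initial distribution $\nu^{\bm X}$. $\mathcal{C}(\alpha,\beta)$ denotes the set of couplings of $\alpha,\beta$. A Markovian coupling between $\mathcal{X}$ and $\mathcal{Y}$ is a (possibly time-inhomogeneous) Markov chain $(X_t,Y_t)_{t\in\mathbb{N}}$ on ${\bm X}\times{\bm Y}$ with $\mathrm{law}(X_0,Y_0)\in\mathcal{C}(\nu^{\bm X},\nu^{\bm Y})$ and, for all $t,x,y$, the conditional law of $(X_{t+1},Y_{t+1})$ given $(X_t,Y_t)=(x,y)$ in $\mathcal{C}(m^{\bm X}_x,m^{\bm Y}_y)$; $\Pi(\mathcal{X},\mathcal{Y})$ is the set of Markovian couplings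 and $\Pi_{\mathrm H}(\mathcal{X},\mathcal{Y})$ the subset of time homogeneous ones (conditional laws independent of $t$). The depth-$\infty$ $\delta$-discounted WL distance is $d^{\delta,(\infty)}_{\mathrm{WL}}(\mathcal{X},\mathcal{Y};C)=\inf_{(X_t,Y_t)\in\Pi(\mathcal{X},\mathcal{Y})}\mathbb{E}\big[\sum_{t=0}^{\infty}\delta(1-\delta)^tC(X_t,Y_t)\big]$. *)

theory Defs
  imports "HOL-Probability.Probability"
begin

text \<open>A finite Markov chain on a finite type 'a is given by a transition kernel
  m :: 'a \<Rightarrow> 'a pmf and an initial distribution nu :: 'a pmf.\<close>

definition is_coupling :: "('a \<times> 'b) pmf \<Rightarrow> 'a pmf \<Rightarrow> 'b pmf \<Rightarrow> bool" where
  "is_coupling p \<alpha> \<beta> \<longleftrightarrow> map_pmf fst p = \<alpha> \<and> map_pmf snd p = \<beta>"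

primrec chain_law :: "('a \<times> 'b) pmf \<Rightarrow> (nat \<Rightarrow> 'a \<times> 'b \<Rightarrow> ('a \<times> 'b) pmf) \<Rightarrow> nat \<Rightarrow> ('a \<times> 'b) pmf" where
  "chain_law mu0 K 0 = mu0"
| "chain_law mu0 K (Suc t) = bind_pmf (chain_law mu0 K t) (K t)"

definition markov_couplings ::
  "('a \<Rightarrow> 'a pmf) \<Rightarrow> 'a pmf \<Rightarrow> ('b \<Rightarrow> 'b pmf) \<Rightarrow> 'b pmf
    \<Rightarrow> (('a \<times> 'b) pmf \<times> (nat \<Rightarrow> 'a \<times> 'b \<Rightarrow> ('a \<times> 'b) pmf)) set" where
  "markov_couplings mX nuX mY nuY =
     {(mu0, K). is_coupling mu0 nuX nuY \<and>
        (\<forall>t x y. is_coupling (K t (x, y)) (mX x) (mY y))}"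

definition hom_markov_couplings ::
  "('a \<Rightarrow> 'a pmf) \<Rightarrow> 'a pmf \<Rightarrow> ('b \<Rightarrow> 'b pmf) \<Rightarrow> 'b pmf
    \<Rightarrow> (('a \<times> 'b) pmf \<times> (nat \<Rightarrow> 'a \<times> 'b \<Rightarrow> ('a \<times> 'b) pmf)) set" where
  "hom_markov_couplings mX nuX mY nuY =
     {(mu0, K) \<in> markov_couplings mX nuX mY nuY. \<forall>t. K t = K 0}"

text \<open>E[ sum_t delta (1-delta)^t C(X_t,Y_t) ], written (by Tonelli, all terms being
  nonnegative) as sum_t delta (1-delta)^t E[C(X_t,Y_t)].\<close>
definition discounted_cost ::
  "real \<Rightarrow> ('a \<Rightarrow> 'b \<Rightarrow> real) \<Rightarrow> ('a \<times> 'b) pmf \<times> (nat \<Rightarrow> 'a \<times> 'b \<Rightarrow> ('a \<times> 'b) pmf) \<Rightarrow> real" where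
  "discounted_cost \<delta> C c =
     (\<Sum>t. \<delta> * (1 - \<delta>) ^ t *
        measure_pmf.expectation (chain_law (fst c) (snd c) t) (\<lambda>(x, y). C x y))"

definition dWL_inf ::
  "real \<Rightarrow> ('a \<Rightarrow> 'a pmf) \<Rightarrow> 'a pmf \<Rightarrow> ('b \<Rightarrow> 'b pmf) \<Rightarrow> 'b pmf \<Rightarrow> ('a \<Rightarrow> 'b \<Rightarrow> real) \<Rightarrow> real" where
  "dWL_inf \<delta> mX nuX mY nuY C =
     (INF c \<in> markov_couplings mX nuX mY nuY. discounted_cost \<delta> C c)"

text \<open>E C(X_T, Y_T) with T ~ Geom(delta) (Pr(T=t) = delta (1-delta)^t) independent
  of the coupling: the law of (X_T,Y_T) is the mixture of the time-t laws.\<close>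
definition cost_at_geometric_time ::
  "real \<Rightarrow> ('a \<Rightarrow> 'b \<Rightarrow> real) \<Rightarrow> ('a \<times> 'b) pmf \<times> (nat \<Rightarrow> 'a \<times> 'b \<Rightarrow> ('a \<times> 'b) pmf) \<Rightarrow> real" where
  "cost_at_geometric_time \<delta> C c =
     measure_pmf.expectation
       (bind_pmf (geometric_pmf \<delta>) (\<lambda>T. chain_law (fst c) (snd c) T)) (\<lambda>(x, y). C x y)"

end

theory Submission
  imports Defs
begin

text \<open>The Bellman operator
  \<open>(B v)(x, y) = \<delta> C(x, y) + (1 - \<delta>) min {E\<^sub>q v | q coupling of m\<^sub>x and m\<^sub>y}\<close>
  is a \<open>(1 - \<delta>)\<close>-contraction for the sup norm; let \<open>v\<close> be its fixed point.
  Along any Markovian coupling, time-homogeneous or not, \<open>v\<close> is a subsolution of the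
  one-step recursion of the discounted cost, so telescoping gives \<open>E v(X\<^sub>0, Y\<^sub>0)\<close> as a lower
  bound for the discounted cost, and the lower bound is minimised by an optimal initial coupling.
  The homogeneous coupling that always moves by a coupling optimal for \<open>v\<close> turns the recursion
  into an equality and so attains the bound. Finally, \<open>E C(X\<^sub>T, Y\<^sub>T)\<close> with \<open>T\<close> geometric and
  independent of the chain is the discounted cost, by exchanging the expectation over \<open>T\<close>
  with the one over the chain.\<close>

lemma integrable_measure_pmf_finite_type [simp]:
  fixes p :: "'s::finite pmf" and f :: "'s \<Rightarrow> real"
  shows "integrable (measure_pmf p) f"
  by (rule integrable_measure_pmf_finite) simp

lemma expectation_finite_type:
  fixes p :: "'s::finite pmf"
  shows "measure_pmf.expectation p f = (\<Sum>s\<in>UNIV. pmf p s * f s)"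
  by (subst integral_measure_pmf_real[of UNIV]) (auto simp: mult.commute)

lemma abs_expectation_le:
  fixes f :: "'s \<Rightarrow> real"
  assumes "\<And>s. \<bar>f s\<bar> \<le> B"
  shows "\<bar>measure_pmf.expectation p f\<bar> \<le> B"
proof -
  have "integrable (measure_pmf p) f"
    by (rule measure_pmf.integrable_const_bound[where B=B]) (auto simp: assms)
  then have "measure_pmf.expectation p (\<lambda>s. \<bar>f s\<bar>) \<le> B"
    by (intro measure_pmf.integral_le_const) (auto simp: assms)
  moreover have "\<bar>measure_pmf.expectation p f\<bar> \<le> measure_pmf.expectation p (\<lambda>s. \<bar>f s\<bar>)"
    using integral_norm_bound[of p f] by (simp only: real_norm_def)
  ultimately show ?thesis
    by linarith
qed

lemma expectation_bounded_finite_type: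
  fixes f :: "'s::finite \<Rightarrow> real"
  obtains B where "\<And>p. \<bar>measure_pmf.expectation p f\<bar> \<le> B"
proof
  show "\<bar>measure_pmf.expectation p f\<bar> \<le> (\<Sum>s\<in>UNIV. \<bar>f s\<bar>)" for p
    by (rule abs_expectation_le, rule member_le_sum) auto
qed

lemma expectation_bind_pmf:
  fixes N :: "'i \<Rightarrow> 's::finite pmf" and f :: "'s \<Rightarrow> real"
  shows "measure_pmf.expectation (M \<bind> N) f =
         measure_pmf.expectation M (\<lambda>i. measure_pmf.expectation (N i) f)"
proof -
  have "measure_pmf.expectation (M \<bind> N) f =
        (\<Sum>s\<in>UNIV. measure_pmf.expectation M (\<lambda>i. pmf (N i) s * f s))"
    by (simp add: expectation_finite_type pmf_bind)
  also have "\<dots> = measure_pmf.expectation M (\<lambda>i. \<Sum>s\<in>UNIV. pmf (N i) s * f s)"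
    by (rule Bochner_Integration.integral_sum[symmetric])
      (auto intro!: measure_pmf.integrable_const_bound[where B=1] simp: pmf_le_1)
  finally show ?thesis
    by (simp add: expectation_finite_type)
qed

lemma expectation_geometric_pmf:
  fixes g :: "nat \<Rightarrow> real"
  assumes "0 < p" "p \<le> 1" and bound: "\<And>n. \<bar>g n\<bar> \<le> B"
  shows "measure_pmf.expectation (geometric_pmf p) g = (\<Sum>n. p * (1 - p) ^ n * g n)"
proof -
  have "summable (\<lambda>n. \<bar>p * (1 - p) ^ n * g n\<bar>)"
  proof (rule summable_comparison_test)
    show "\<exists>N. \<forall>n\<ge>N. norm \<bar>p * (1 - p) ^ n * g n\<bar> \<le> B * (p * (1 - p) ^ n)"
      using assms by (auto simp: abs_mult mult.commute intro!: mult_right_mono)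
    show "summable (\<lambda>n. B * (p * (1 - p) ^ n))"
      using assms by (intro summable_mult summable_geometric) auto
  qed
  then show ?thesis
    using assms
    by (simp add: pmf_expectation_eq_infsetsum infsetsum_nat' abs_summable_on_nat_iff' mult_ac)
qed

lemma expectation_chain_law_Suc:
  fixes \<mu> :: "('a::finite \<times> 'b::finite) pmf" and f :: "'a \<times> 'b \<Rightarrow> real"
  shows "measure_pmf.expectation (chain_law \<mu> K (Suc t)) f =
         measure_pmf.expectation (chain_law \<mu> K t) (\<lambda>s. measure_pmf.expectation (K t s) f)"
  by (simp add: expectation_bind_pmf)

lemma discounted_cost_sums:
  fixes \<mu> :: "('a::finite \<times> 'b::finite) pmf"
  assumes "0 < \<delta>" "\<delta> \<le> 1"
  shows "(\<lambda>t. \<delta> * (1 - \<delta>) ^ t * measure_pmf.expectation (chain_law \<mu> K t) (\<lambda>(x, y). C x y))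
           sums discounted_cost \<delta> C (\<mu>, K)"
proof -
  obtain B where "\<And>p. \<bar>measure_pmf.expectation p (case_prod C)\<bar> \<le> B"
    using expectation_bounded_finite_type[of "case_prod C"] by metis
  then have "norm (\<delta> * (1 - \<delta>) ^ t * measure_pmf.expectation (chain_law \<mu> K t) (case_prod C))
      \<le> \<delta> * (1 - \<delta>) ^ t * B" for t
    using assms by (simp add: abs_mult mult_left_mono)
  moreover have "summable (\<lambda>t. \<delta> * (1 - \<delta>) ^ t * B)"
    using assms by (intro summable_mult2 summable_mult summable_geometric) auto
  ultimately have
    "summable (\<lambda>t. \<delta> * (1 - \<delta>) ^ t * measure_pmf.expectation (chain_law \<mu> K t) (case_prod C))"
    by (rule summable_comparison_test'[rotated])
  then show ?thesis
    by (simp add: discounted_cost_def summable_sums)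
qed

lemma cost_at_geometric_time_eq_discounted_cost:
  fixes c :: "('a::finite \<times> 'b::finite) pmf \<times> (nat \<Rightarrow> 'a \<times> 'b \<Rightarrow> ('a \<times> 'b) pmf)"
  assumes "0 < \<delta>" "\<delta> \<le> 1"
  shows "cost_at_geometric_time \<delta> C c = discounted_cost \<delta> C c"
proof -
  obtain B where bound: "\<And>p. \<bar>measure_pmf.expectation p (case_prod C)\<bar> \<le> B"
    using expectation_bounded_finite_type[of "case_prod C"] by metis
  show ?thesis
    unfolding cost_at_geometric_time_def discounted_cost_def
    by (simp add: expectation_bind_pmf expectation_geometric_pmf[OF assms bound])
qed

lemma discounted_defects_sums:
  fixes \<mu> :: "('a::finite \<times> 'b::finite) pmf" and v :: "'a \<times> 'b \<Rightarrow> real"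
  assumes "0 < \<delta>" "\<delta> \<le> 1"
  shows "(\<lambda>t. (1 - \<delta>) ^ t * measure_pmf.expectation (chain_law \<mu> K t)
            (\<lambda>s. v s - (1 - \<delta>) * measure_pmf.expectation (K t s) v))
           sums measure_pmf.expectation \<mu> v"
proof -
  let ?E = "\<lambda>t. measure_pmf.expectation (chain_law \<mu> K t) v"
  have partial_sums: "(\<Sum>t<n. (1 - \<delta>) ^ t * measure_pmf.expectation (chain_law \<mu> K t)
            (\<lambda>s. v s - (1 - \<delta>) * measure_pmf.expectation (K t s) v))
        = measure_pmf.expectation \<mu> v - (1 - \<delta>) ^ n * ?E n" for n
  proof (induction n)
    case (Suc n)
    show ?case
      unfolding sum.lessThan_Suc Suc.IH
      by (simp add: expectation_chain_law_Suc algebra_simps del: chain_law.simps)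
  qed simp
  obtain B where "\<And>p. \<bar>measure_pmf.expectation p v\<bar> \<le> B"
    using expectation_bounded_finite_type[of v] by metis
  then have "norm ((1 - \<delta>) ^ n * ?E n) \<le> (1 - \<delta>) ^ n * B" for n
    using assms by (simp add: abs_mult mult_left_mono)
  moreover have "(\<lambda>n. (1 - \<delta>) ^ n * B) \<longlonglongrightarrow> 0"
    using assms by (intro tendsto_mult_left_zero LIMSEQ_power_zero) auto
  ultimately have "(\<lambda>n. (1 - \<delta>) ^ n * ?E n) \<longlonglongrightarrow> 0"
    by (rule Lim_null_comparison[OF always_eventually[OF allI]])
  then have "(\<lambda>n. measure_pmf.expectation \<mu> v - (1 - \<delta>) ^ n * ?E n) \<longlonglongrightarrow> measure_pmf.expectation \<mu> v"
    using tendsto_diff[OF tendsto_const] by fastforce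
  then show ?thesis
    unfolding sums_def partial_sums .
qed

lemma discounted_cost_ge_subsolution:
  fixes \<mu> :: "('a::finite \<times> 'b::finite) pmf" and v :: "'a \<times> 'b \<Rightarrow> real"
  assumes "0 < \<delta>" "\<delta> \<le> 1"
    and subsolution: "\<And>t s. v s \<le> \<delta> * case_prod C s + (1 - \<delta>) * measure_pmf.expectation (K t s) v"
  shows "measure_pmf.expectation \<mu> v \<le> discounted_cost \<delta> C (\<mu>, K)"
proof (rule sums_le[OF _ discounted_defects_sums[OF assms(1,2)]
                         discounted_cost_sums[OF assms(1,2)]])
  fix t
  have "measure_pmf.expectation (chain_law \<mu> K t)
          (\<lambda>s. v s - (1 - \<delta>) * measure_pmf.expectation (K t s) v)
      \<le> measure_pmf.expectation (chain_law \<mu> K t) (\<lambda>s. \<delta> * case_prod C s)"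
    using subsolution by (intro integral_mono) (auto simp: algebra_simps)
  also have "\<dots> = \<delta> * measure_pmf.expectation (chain_law \<mu> K t) (case_prod C)"
    by simp
  finally have "(1 - \<delta>) ^ t * measure_pmf.expectation (chain_law \<mu> K t)
            (\<lambda>s. v s - (1 - \<delta>) * measure_pmf.expectation (K t s) v)
        \<le> (1 - \<delta>) ^ t * (\<delta> * measure_pmf.expectation (chain_law \<mu> K t) (case_prod C))"
    using assms by (intro mult_left_mono) auto
  then show "(1 - \<delta>) ^ t * measure_pmf.expectation (chain_law \<mu> K t)
            (\<lambda>s. v s - (1 - \<delta>) * measure_pmf.expectation (K t s) v)
        \<le> \<delta> * (1 - \<delta>) ^ t * measure_pmf.expectation (chain_law \<mu> K t) (case_prod C)"
    by (simp only: ac_simps)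
qed

lemma discounted_cost_eq_solution:
  fixes \<mu> :: "('a::finite \<times> 'b::finite) pmf" and v :: "'a \<times> 'b \<Rightarrow> real"
  assumes "0 < \<delta>" "\<delta> \<le> 1"
    and solution: "\<And>t s. v s = \<delta> * case_prod C s + (1 - \<delta>) * measure_pmf.expectation (K t s) v"
  shows "discounted_cost \<delta> C (\<mu>, K) = measure_pmf.expectation \<mu> v"
proof -
  have "v s - (1 - \<delta>) * measure_pmf.expectation (K t s) v = \<delta> * case_prod C s" for t s
    using solution[of s t] by simp
  then have "(\<lambda>t. \<delta> * (1 - \<delta>) ^ t * measure_pmf.expectation (chain_law \<mu> K t) (case_prod C))
      sums measure_pmf.expectation \<mu> v"
    using discounted_defects_sums[OF assms(1,2), of \<mu> K v] by (simp add: mult_ac)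
  then show ?thesis
    using discounted_cost_sums[OF assms(1,2)] by (rule sums_unique2[symmetric])
qed

lemma pmf_map_fst_eq_sum:
  fixes q :: "('a::finite \<times> 'b::finite) pmf"
  shows "pmf (map_pmf fst q) a = (\<Sum>b\<in>UNIV. pmf q (a, b))"
proof -
  have "pmf (map_pmf fst q) a = sum (pmf q) (fst -` {a})"
    by (simp add: pmf_map measure_measure_pmf_finite)
  also have "fst -` {a} = Pair a ` UNIV"
    by auto
  finally show ?thesis
    by (simp add: sum.reindex inj_on_def)
qed

lemma pmf_map_snd_eq_sum:
  fixes q :: "('a::finite \<times> 'b::finite) pmf"
  shows "pmf (map_pmf snd q) b = (\<Sum>a\<in>UNIV. pmf q (a, b))"
proof -
  have "pmf (map_pmf snd q) b = sum (pmf q) (snd -` {b})"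
    by (simp add: pmf_map measure_measure_pmf_finite)
  also have "snd -` {b} = (\<lambda>a. (a, b)) ` UNIV"
    by auto
  finally show ?thesis
    by (simp add: sum.reindex inj_on_def)
qed

definition transport_polytope :: "'a::finite pmf \<Rightarrow> 'b::finite pmf \<Rightarrow> (real ^ ('a \<times> 'b)) set" where
  "transport_polytope \<alpha> \<beta> =
     {v. (\<forall>s. 0 \<le> v $ s) \<and> (\<forall>a. (\<Sum>b\<in>UNIV. v $ (a, b)) = pmf \<alpha> a)
         \<and> (\<forall>b. (\<Sum>a\<in>UNIV. v $ (a, b)) = pmf \<beta> b)}"

lemma coupling_in_transport_polytope:
  assumes "is_coupling q \<alpha> \<beta>"
  shows "(\<chi> s. pmf q s) \<in> transport_polytope \<alpha> \<beta>"
  using assms unfolding transport_polytope_def is_coupling_def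
  by (auto simp: pmf_map_fst_eq_sum pmf_map_snd_eq_sum)

lemma transport_polytope_nonempty: "transport_polytope \<alpha> \<beta> \<noteq> {}"
proof -
  have "is_coupling (pair_pmf \<alpha> \<beta>) \<alpha> \<beta>"
    by (simp add: is_coupling_def map_fst_pair_pmf map_snd_pair_pmf)
  then show ?thesis
    using coupling_in_transport_polytope by blast
qed

lemma compact_transport_polytope: "compact (transport_polytope \<alpha> \<beta>)"
proof -
  have "closed (transport_polytope \<alpha> \<beta>)"
    unfolding transport_polytope_def
    by (intro closed_Collect_all closed_Collect_conj closed_Collect_le closed_Collect_eq
        continuous_intros)
  moreover have "transport_polytope \<alpha> \<beta> \<subseteq> cbox 0 1"
  proof
    fix v assume v: "v \<in> transport_polytope \<alpha> \<beta>"
    have "v $ (a, b) \<le> 1" for a b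
    proof -
      have "v $ (a, b) \<le> (\<Sum>b'\<in>UNIV. v $ (a, b'))"
        using v unfolding transport_polytope_def by (intro member_le_sum) auto
      also have "\<dots> \<le> 1"
        using v unfolding transport_polytope_def by (simp add: pmf_le_1)
      finally show ?thesis .
    qed
    then show "v \<in> cbox 0 1"
      using v unfolding transport_polytope_def by (auto simp: mem_box_cart)
  qed
  ultimately show ?thesis
    by (metis bounded_cbox bounded_subset compact_eq_bounded_closed)
qed

lemma transport_polytope_imp_coupling:
  assumes v: "v \<in> transport_polytope \<alpha> \<beta>"
  obtains p where "is_coupling p \<alpha> \<beta>" "\<And>s. pmf p s = v $ s"
proof
  have nonneg: "0 \<le> v $ s" for s
    using v unfolding transport_polytope_def by blast
  have "(\<Sum>s\<in>UNIV. v $ s) = (\<Sum>a\<in>UNIV. \<Sum>b\<in>UNIV. v $ (a, b))"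
    by (simp add: sum.cartesian_product UNIV_Times_UNIV[symmetric] del: UNIV_Times_UNIV)
  also have "\<dots> = 1"
    using v unfolding transport_polytope_def by (simp add: sum_pmf_eq_1)
  finally have "(\<Sum>s\<in>UNIV. v $ s) = 1" .
  then show pmf_eq: "pmf (embed_pmf (\<lambda>s. v $ s)) s = v $ s" for s
    by (intro pmf_embed_pmf) (simp_all add: nonneg nn_integral_count_space_finite)
  show "is_coupling (embed_pmf (\<lambda>s. v $ s)) \<alpha> \<beta>"
    using v unfolding is_coupling_def transport_polytope_def
    by (auto intro!: pmf_eqI simp: pmf_map_fst_eq_sum pmf_map_snd_eq_sum pmf_eq)
qed

lemma exists_optimal_coupling:
  fixes \<alpha> :: "'a::finite pmf" and \<beta> :: "'b::finite pmf" and f :: "'a \<times> 'b \<Rightarrow> real"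
  shows "\<exists>p. is_coupling p \<alpha> \<beta> \<and>
           (\<forall>q. is_coupling q \<alpha> \<beta> \<longrightarrow> measure_pmf.expectation p f \<le> measure_pmf.expectation q f)"
proof -
  have "continuous_on (transport_polytope \<alpha> \<beta>) (\<lambda>v. \<Sum>s\<in>UNIV. v $ s * f s)"
    by (intro continuous_intros)
  then obtain v where v: "v \<in> transport_polytope \<alpha> \<beta>"
    and min: "\<And>w. w \<in> transport_polytope \<alpha> \<beta> \<Longrightarrow> (\<Sum>s\<in>UNIV. v $ s * f s) \<le> (\<Sum>s\<in>UNIV. w $ s * f s)"
    using continuous_attains_inf[OF compact_transport_polytope transport_polytope_nonempty] by blast
  obtain p where p: "is_coupling p \<alpha> \<beta>" and pmf_p: "\<And>s. pmf p s = v $ s"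
    using transport_polytope_imp_coupling[OF v] by blast
  have "measure_pmf.expectation p f \<le> measure_pmf.expectation q f" if "is_coupling q \<alpha> \<beta>" for q
    using min[OF coupling_in_transport_polytope[OF that]]
    unfolding expectation_finite_type pmf_p by simp
  with p show ?thesis
    by blast
qed

definition optimal_coupling :: "'a::finite pmf \<Rightarrow> 'b::finite pmf \<Rightarrow> ('a \<times> 'b \<Rightarrow> real) \<Rightarrow> ('a \<times> 'b) pmf"
  where "optimal_coupling \<alpha> \<beta> f = (SOME p. is_coupling p \<alpha> \<beta> \<and>
     (\<forall>q. is_coupling q \<alpha> \<beta> \<longrightarrow> measure_pmf.expectation p f \<le> measure_pmf.expectation q f))"

lemma is_coupling_optimal_coupling: "is_coupling (optimal_coupling \<alpha> \<beta> f) \<alpha> \<beta>"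
  and optimal_coupling_le:
    "is_coupling q \<alpha> \<beta> \<Longrightarrow>
      measure_pmf.expectation (optimal_coupling \<alpha> \<beta> f) f \<le> measure_pmf.expectation q f"
  using someI_ex[OF exists_optimal_coupling[of \<alpha> \<beta> f]] unfolding optimal_coupling_def by blast+

lemma optimal_coupling_cost_nonexpansive:
  fixes v w :: "'a::finite \<times> 'b::finite \<Rightarrow> real"
  assumes "\<And>s. \<bar>v s - w s\<bar> \<le> M"
  shows "\<bar>measure_pmf.expectation (optimal_coupling \<alpha> \<beta> v) v
          - measure_pmf.expectation (optimal_coupling \<alpha> \<beta> w) w\<bar> \<le> M"
proof -
  have one_sided: "measure_pmf.expectation (optimal_coupling \<alpha> \<beta> f) f
        \<le> measure_pmf.expectation (optimal_coupling \<alpha> \<beta> g) g + M"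
    if "\<And>s. f s \<le> g s + M" for f g :: "'a \<times> 'b \<Rightarrow> real"
  proof -
    have "measure_pmf.expectation (optimal_coupling \<alpha> \<beta> f) f
          \<le> measure_pmf.expectation (optimal_coupling \<alpha> \<beta> g) f"
      by (intro optimal_coupling_le is_coupling_optimal_coupling)
    also have "\<dots> \<le> measure_pmf.expectation (optimal_coupling \<alpha> \<beta> g) (\<lambda>s. g s + M)"
      using that by (intro integral_mono) auto
    finally show ?thesis
      by simp
  qed
  have "v s \<le> w s + M" for s
    using assms[of s] by linarith
  then have "measure_pmf.expectation (optimal_coupling \<alpha> \<beta> v) v
      \<le> measure_pmf.expectation (optimal_coupling \<alpha> \<beta> w) w + M"
    by (rule one_sided)
  moreover have "w s \<le> v s + M" for s
    using assms[of s] by linarith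
  then have "measure_pmf.expectation (optimal_coupling \<alpha> \<beta> w) w
      \<le> measure_pmf.expectation (optimal_coupling \<alpha> \<beta> v) v + M"
    by (rule one_sided)
  ultimately show ?thesis
    by linarith
qed

definition bellman :: "real \<Rightarrow> ('a::finite \<Rightarrow> 'b::finite \<Rightarrow> real) \<Rightarrow> ('a \<Rightarrow> 'a pmf) \<Rightarrow> ('b \<Rightarrow> 'b pmf)
    \<Rightarrow> ('a \<times> 'b \<Rightarrow> real) \<Rightarrow> 'a \<times> 'b \<Rightarrow> real"
  where "bellman \<delta> C mX mY v =
    (\<lambda>(x, y). \<delta> * C x y + (1 - \<delta>) * measure_pmf.expectation (optimal_coupling (mX x) (mY y) v) v)"

lemma funpow_contraction_imp_fixpoint:
  fixes f :: "'v::complete_space \<Rightarrow> 'v"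
  assumes "0 \<le> c" "c < 1" "\<And>x y. dist ((f ^^ k) x) ((f ^^ k) y) \<le> c * dist x y"
  shows "\<exists>x. f x = x"
proof -
  obtain x where x: "(f ^^ k) x = x" and unique: "\<And>y. (f ^^ k) y = y \<Longrightarrow> y = x"
    using banach_fix_type[of c "f ^^ k"] assms by metis
  have "(f ^^ k) (f x) = f x"
    by (metis x funpow_swap1)
  then show ?thesis
    using unique by blast
qed

lemma sup_contraction_imp_fixpoint:
  fixes f :: "('s::finite \<Rightarrow> real) \<Rightarrow> 's \<Rightarrow> real"
  assumes "0 \<le> c" "c < 1"
    and contraction: "\<And>v w M s. (\<And>s'. \<bar>v s' - w s'\<bar> \<le> M) \<Longrightarrow> \<bar>f v s - f w s\<bar> \<le> c * M"
  shows "\<exists>v. f v = v"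
proof -
  have iterate: "\<bar>(f ^^ k) v s - (f ^^ k) w s\<bar> \<le> c ^ k * M"
    if "\<And>s'. \<bar>v s' - w s'\<bar> \<le> M" for k v w M s
    using that
  proof (induction k arbitrary: s)
    case (Suc k)
    then show ?case
      using contraction[of "(f ^^ k) v" "(f ^^ k) w" "c ^ k * M"] by (simp add: mult.assoc)
  qed simp
  have "(\<lambda>k. real CARD('s) * c ^ k) \<longlonglongrightarrow> 0"
    using assms by (intro tendsto_mult_right_zero LIMSEQ_power_zero) auto
  from order_tendstoD(2)[OF this zero_less_one] obtain k where k: "real CARD('s) * c ^ k < 1"
    by (auto simp: eventually_sequentially)
  \<comment> \<open>\<open>real ^ 's\<close> carries the Euclidean norm, for which \<open>f\<close> need not contract;
    the iterate \<open>f ^^ k\<close> does once \<open>CARD('s) * c ^ k < 1\<close>.\<close>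
  define g :: "real ^ 's \<Rightarrow> real ^ 's" where "g x = (\<chi> s. f (vec_nth x) s)" for x
  have g_iterate: "vec_nth ((g ^^ k) x) = (f ^^ k) (vec_nth x)" for k x
    by (induction k) (auto simp: g_def)
  have "dist ((g ^^ k) x) ((g ^^ k) y) \<le> (real CARD('s) * c ^ k) * dist x y" for x y
  proof -
    have "\<bar>x $ s - y $ s\<bar> \<le> dist x y" for s
      using component_le_norm_cart[of "x - y" s] by (simp add: dist_norm)
    then have "\<bar>(g ^^ k) x $ s - (g ^^ k) y $ s\<bar> \<le> c ^ k * dist x y" for s
      unfolding g_iterate by (rule iterate)
    then have "(\<Sum>s\<in>UNIV. \<bar>((g ^^ k) x - (g ^^ k) y) $ s\<bar>) \<le> (\<Sum>s\<in>(UNIV :: 's set). c ^ k * dist x y)"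
      by (intro sum_mono) simp
    then show ?thesis
      using norm_le_l1_cart[of "(g ^^ k) x - (g ^^ k) y"] by (simp add: dist_norm)
  qed
  then obtain x where "g x = x"
    using funpow_contraction_imp_fixpoint[where c="real CARD('s) * c ^ k" and f=g and k=k] k assms
    by auto
  then have "f (vec_nth x) = vec_nth x"
    unfolding g_def by (metis vec_lambda_beta ext)
  then show ?thesis
    by blast
qed

lemma bellman_has_fixpoint:
  assumes "0 < \<delta>" "\<delta> \<le> 1"
  shows "\<exists>v. bellman \<delta> C mX mY v = v"
proof (rule sup_contraction_imp_fixpoint)
  fix v w :: "'a \<times> 'b \<Rightarrow> real" and M s
  assume "\<And>s'. \<bar>v s' - w s'\<bar> \<le> M"
  then have "\<bar>measure_pmf.expectation (optimal_coupling (mX (fst s)) (mY (snd s)) v) v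
           - measure_pmf.expectation (optimal_coupling (mX (fst s)) (mY (snd s)) w) w\<bar> \<le> M"
    by (rule optimal_coupling_cost_nonexpansive)
  then show "\<bar>bellman \<delta> C mX mY v s - bellman \<delta> C mX mY w s\<bar> \<le> (1 - \<delta>) * M"
    using assms unfolding bellman_def
    by (auto simp: right_diff_distrib[symmetric] abs_mult intro!: mult_left_mono split: prod.split)
qed (use assms in auto)

lemma exists_optimal_hom_markov_coupling:
  fixes mX :: "'a::finite \<Rightarrow> 'a pmf" and mY :: "'b::finite \<Rightarrow> 'b pmf"
  assumes "0 < \<delta>" "\<delta> \<le> 1"
  shows "\<exists>c\<in>hom_markov_couplings mX nuX mY nuY. \<forall>c'\<in>markov_couplings mX nuX mY nuY.
           discounted_cost \<delta> C c \<le> discounted_cost \<delta> C c'"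
proof -
  obtain v where fixpoint: "bellman \<delta> C mX mY v = v"
    using bellman_has_fixpoint[OF assms] by blast
  define \<mu> where "\<mu> = optimal_coupling nuX nuY v"
  define K where "K = (\<lambda>_::nat. \<lambda>(x, y). optimal_coupling (mX x) (mY y) v)"
  have hom: "(\<mu>, K) \<in> hom_markov_couplings mX nuX mY nuY"
    by (simp add: hom_markov_couplings_def markov_couplings_def \<mu>_def K_def
        is_coupling_optimal_coupling)
  have bellman_eq:
    "v (x, y) = \<delta> * C x y + (1 - \<delta>) * measure_pmf.expectation (optimal_coupling (mX x) (mY y) v) v"
    for x y
    using fun_cong[OF fixpoint, of "(x, y)"] by (simp add: bellman_def)
  then have "discounted_cost \<delta> C (\<mu>, K) = measure_pmf.expectation \<mu> v"
    by (intro discounted_cost_eq_solution[OF assms]) (auto simp: K_def)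
  moreover have "measure_pmf.expectation \<mu> v \<le> discounted_cost \<delta> C (\<mu>', K')"
    if "(\<mu>', K') \<in> markov_couplings mX nuX mY nuY" for \<mu>' K'
  proof -
    have "measure_pmf.expectation \<mu> v \<le> measure_pmf.expectation \<mu>' v"
      using that by (simp add: \<mu>_def markov_couplings_def optimal_coupling_le)
    also have "\<dots> \<le> discounted_cost \<delta> C (\<mu>', K')"
    proof (rule discounted_cost_ge_subsolution[OF assms])
      fix t and s :: "'a \<times> 'b"
      obtain x y where s: "s = (x, y)"
        by (cases s)
      have "measure_pmf.expectation (optimal_coupling (mX x) (mY y) v) v
          \<le> measure_pmf.expectation (K' t s) v"
        using that by (simp add: s markov_couplings_def optimal_coupling_le)
      then show "v s \<le> \<delta> * case_prod C s + (1 - \<delta>) * measure_pmf.expectation (K' t s) v"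
        using assms by (simp add: s bellman_eq mult_left_mono)
    qed
    finally show ?thesis .
  qed
  ultimately have "discounted_cost \<delta> C (\<mu>, K) \<le> discounted_cost \<delta> C c'"
    if "c' \<in> markov_couplings mX nuX mY nuY" for c'
    using that by (cases c') auto
  with hom show ?thesis
    by blast
qed

theorem proposition14:
  fixes mX :: "'a::finite \<Rightarrow> 'a pmf" and nuX :: "'a pmf"
    and mY :: "'b::finite \<Rightarrow> 'b pmf" and nuY :: "'b pmf"
    and C :: "'a \<Rightarrow> 'b \<Rightarrow> real" and \<delta> :: real
  assumes "\<And>x y. C x y \<ge> 0"
    and "0 < \<delta>" and "\<delta> \<le> 1"
  shows "\<exists>c \<in> hom_markov_couplings mX nuX mY nuY.
           dWL_inf \<delta> mX nuX mY nuY C = cost_at_geometric_time \<delta> C c \<and>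
           (\<forall>c' \<in> hom_markov_couplings mX nuX mY nuY.
              cost_at_geometric_time \<delta> C c \<le> cost_at_geometric_time \<delta> C c')"
proof -
  obtain c where hom: "c \<in> hom_markov_couplings mX nuX mY nuY"
    and optimal:
      "\<forall>c'\<in>markov_couplings mX nuX mY nuY. discounted_cost \<delta> C c \<le> discounted_cost \<delta> C c'"
    using exists_optimal_hom_markov_coupling[OF assms(2,3)] by blast
  have hom_subset: "hom_markov_couplings mX nuX mY nuY \<subseteq> markov_couplings mX nuX mY nuY"
    by (auto simp: hom_markov_couplings_def)
  have geometric: "cost_at_geometric_time \<delta> C c' = discounted_cost \<delta> C c'" for c'
    by (rule cost_at_geometric_time_eq_discounted_cost[OF assms(2,3)])
  have "dWL_inf \<delta> mX nuX mY nuY C = discounted_cost \<delta> C c"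
    unfolding dWL_inf_def using hom hom_subset optimal by (intro cInf_eq_minimum) auto
  with hom hom_subset optimal show ?thesis
    unfolding geometric by blast
qed

end
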